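(* Let $n\ge2$, $A\in\mathbb{R}^{n\times n}$ symmetric with eigenvalues $\lambda_1\ge\dots\ge\lambda_n$, $\rho=\lambda_1-\lambda_n$, $\gamma>0$, and suppose $\beta\ge\frac{8n}{n-1}(1+\gamma)\rho\,n^{3/2}$. Then $f(\mathbf{z})=\frac12\mathbf{z}^TA\mathbf{z}+\frac{\beta}{2}\sum_kz_k^4$ on $\mathbb{S}^{n-1}$ is $(C_\gamma\rho,\frac{\gamma}{\sqrt2}\rho,C_\gamma\rho)$-strict-saddle, where $C_\gamma=\frac{4}{n-1}(1+\gamma)n^{3/2}-1$.
   Context: $\mathbb{S}^{n-1}$ is the unit sphere in $\mathbb{R}^n$, $\mathcal{T}_{\mathbf{z}}=\{\mathbf{v}:\mathbf{v}^T\mathbf{z}=0\}$. For $\mathbf{z}\in\mathbb{S}^{n-1}$ let $2\lambda=\mathbf{z}^TA\mathbf{z}+2\beta\|\mathbf{z}\|_4^4$, $\mathrm{grad} f(\mathbf{z})=[A+2\beta\,\mathrm{diag}(z_1^2,\dots,z_n^2)]\mathbf{z}-2\lambda\mathbf{z}$, and $H_f(\mathbf{z})[\mathbf{v}]=\mathbf{v}^T[A+6\beta\,\mathrm{diag}(z_1^2,\dots,z_n^2)-2\lambda I]\mathbf{v}$. For $\xi,\epsilon,\zeta>0$, $f$ is $(\xi,\epsilon,\zeta)$-strict-saddle if for every $\mathbf{z}\in\mathbb{S}^{n-1}$ at least one holds: (1) $H_f(\mathbf{z})[\mathbf{v}]\ge\xi$ for all $\mathbf{v}\in\mathcal{T}_{\mathbf{z}}\cap\mathbb{S}^{n-1}$;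 (2) $\|\mathrm{grad} f(\mathbf{z})\|\ge\epsilon$; (3) there is $\mathbf{v}\in\mathcal{T}_{\mathbf{z}}\cap\mathbb{S}^{n-1}$ with $H_f(\mathbf{z})[\mathbf{v}]\le-\zeta$. *)

theory Defs
  imports "HOL-Analysis.Analysis"
begin

definition symmetric_mat :: "real^'n^'n \<Rightarrow> bool" where
  "symmetric_mat A \<longleftrightarrow> transpose A = A"

definition eigenvalues :: "real^'n^'n \<Rightarrow> real set" where
  "eigenvalues A = {l. \<exists>v. v \<noteq> 0 \<and> A *v v = l *\<^sub>R v}"

definition spread :: "real^'n^'n \<Rightarrow> real" where
  "spread A = Max (eigenvalues A) - Min (eigenvalues A)"

definition diag_sq :: "real^'n \<Rightarrow> real^'n^'n" where
  "diag_sq z = (\<chi> i j. if i = j then (z$i)^2 else 0)"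

definition lam :: "real^'n^'n \<Rightarrow> real \<Rightarrow> real^'n \<Rightarrow> real" where
  "lam A \<beta> z = (z \<bullet> (A *v z) + 2 * \<beta> * (\<Sum>k\<in>UNIV. (z$k)^4)) / 2"

definition rgrad :: "real^'n^'n \<Rightarrow> real \<Rightarrow> real^'n \<Rightarrow> real^'n" where
  "rgrad A \<beta> z = (A + (2 * \<beta>) *\<^sub>R diag_sq z) *v z - (2 * lam A \<beta> z) *\<^sub>R z"

definition rhess :: "real^'n^'n \<Rightarrow> real \<Rightarrow> real^'n \<Rightarrow> real^'n \<Rightarrow> real" where
  "rhess A \<beta> z v = v \<bullet> ((A + (6 * \<beta>) *\<^sub>R diag_sq z - (2 * lam A \<beta> z) *\<^sub>R mat 1) *v v)"

text \<open>(xi, eps, zeta)-strict-saddle property of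
  f(z) = 1/2 z^T A z + beta/2 sum_k z_k^4 on the unit sphere.\<close>
definition strict_saddle :: "real^'n^'n \<Rightarrow> real \<Rightarrow> real \<Rightarrow> real \<Rightarrow> real \<Rightarrow> bool" where
  "strict_saddle A \<beta> \<xi> \<epsilon> \<zeta> \<longleftrightarrow>
     (\<forall>z. norm z = 1 \<longrightarrow>
        (\<forall>v. v \<bullet> z = 0 \<and> norm v = 1 \<longrightarrow> rhess A \<beta> z v \<ge> \<xi>)
      \<or> norm (rgrad A \<beta> z) \<ge> \<epsilon>
      \<or> (\<exists>v. v \<bullet> z = 0 \<and> norm v = 1 \<and> rhess A \<beta> z v \<le> - \<zeta>))"

end

theory Submission
  imports Defs
begin

text \<open>Fix a unit vector \<open>z\<close>, let \<open>s = \<Sum>k. z\<^sub>k\<^sup>4\<close> and let \<open>z\<^sub>j\<close> be a coordinate of least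
  modulus, \<open>\<mu> = z\<^sub>j\<^sup>2\<close>. The Riemannian gradient is the tangential part of \<open>A z\<close>, of norm at
  most \<open>\<rho>/2\<close>, plus \<open>2\<beta>(z\<^sup>3 - s z)\<close>, whose \<open>j\<close>-th entry has square \<open>\<mu>(\<mu> - s)\<^sup>2\<close>. If the
  gradient is small, so is this entry, and since \<open>\<beta> \<ge> 8 (1 + \<gamma>) \<rho> n powr (3/2)\<close> this
  forces \<open>3\<mu> - s \<ge> 1/(4n)\<close> or \<open>6\<mu> - s \<le> -1/(4n)\<close>. The quartic part \<open>2\<beta>(3 \<Sum>i. z\<^sub>i\<^sup>2 v\<^sub>i\<^sup>2 - s)\<close>
  of the Hessian is then at least \<open>\<beta>/(2n)\<close> in every unit tangent direction \<open>v\<close>, respectively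
  at most \<open>-\<beta>/(2n)\<close> in the unit tangent direction closest to the \<open>j\<close>-th axis, while the
  quadratic part varies by at most the spread \<open>\<rho>\<close> over unit vectors.\<close>

lemma diag_sq_mult_vec_nth: "(diag_sq z *v v) $ i = (z$i)\<^sup>2 * v$i"
proof -
  have "(if i = j then (z$i)\<^sup>2 else 0) * v$j = (if i = j then (z$i)\<^sup>2 * v$j else 0)" for j
    by simp
  then show ?thesis
    by (simp add: diag_sq_def matrix_vector_mult_def)
qed

lemma sum_pow4_bounds:
  fixes z :: "real^'n"
  assumes "z \<bullet> z = 1"
  shows "1 / CARD('n) \<le> (\<Sum>i\<in>UNIV. (z$i)^4)" and "(\<Sum>i\<in>UNIV. (z$i)^4) \<le> 1"
proof -
  define n where "n = real CARD('n)"
  have "n > 0" by (simp add: n_def)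
  have sq: "(\<Sum>i\<in>UNIV. (z$i)\<^sup>2) = 1"
    using assms by (simp add: inner_vec_def power2_eq_square)
  have "0 \<le> (\<Sum>i\<in>UNIV. ((z$i)\<^sup>2 - 1/n)\<^sup>2)"
    by (simp add: sum_nonneg)
  also have "\<dots> = (\<Sum>i\<in>UNIV. (z$i)^4) - 2/n * (\<Sum>i\<in>UNIV. (z$i)\<^sup>2) + n * (1/n)\<^sup>2"
    by (simp add: power2_diff sum.distrib sum_subtractf sum_distrib_left n_def
        flip: power_mult)
  also have "\<dots> = (\<Sum>i\<in>UNIV. (z$i)^4) - 1/n"
    using \<open>n > 0\<close> sq by (simp add: power2_eq_square field_simps)
  finally show "1 / CARD('n) \<le> (\<Sum>i\<in>UNIV. (z$i)^4)"
    by (simp add: n_def)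
  have "(z$i)\<^sup>2 \<le> 1" for i
    using member_le_sum[of i UNIV "\<lambda>i. (z$i)\<^sup>2"] sq by simp
  then have "(z$i)^4 \<le> (z$i)\<^sup>2" for i
    using mult_right_mono[of "(z$i)\<^sup>2" 1 "(z$i)\<^sup>2"] by (simp add: power4_eq_xxxx power2_eq_square)
  then have "(\<Sum>i\<in>UNIV. (z$i)^4) \<le> (\<Sum>i\<in>UNIV. (z$i)\<^sup>2)"
    by (rule sum_mono)
  with sq show "(\<Sum>i\<in>UNIV. (z$i)^4) \<le> 1"
    by simp
qed

lemma ex_unit_tangent_weighted_sq_le:
  fixes z :: "real^'n"
  assumes z: "z \<bullet> z = 1" and zj: "(z$j)\<^sup>2 < 1"
  shows "\<exists>v. v \<bullet> z = 0 \<and> v \<bullet> v = 1 \<and> (\<Sum>i\<in>UNIV. (z$i)\<^sup>2 * (v$i)\<^sup>2) \<le> 2 * (z$j)\<^sup>2"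
proof -
  define t where "t = z$j"
  define s where "s = (\<Sum>i\<in>UNIV. (z$i)^4)"
  define d where "d = axis j 1 - t *\<^sub>R z"
  define v where "v = (1 / sqrt (1 - t\<^sup>2)) *\<^sub>R d"
  have pos: "0 < 1 - t\<^sup>2"
    using zj by (simp add: t_def)
  have dz: "d \<bullet> z = 0"
    using z by (simp add: d_def t_def inner_diff_left inner_axis')
  have dd: "d \<bullet> d = 1 - t\<^sup>2"
    using z by (simp add: d_def inner_axis' inner_axis inner_axis_axis t_def power2_eq_square algebra_simps)
  have "(z$i)\<^sup>2 * (d$i)\<^sup>2 = (if i = j then t\<^sup>2 - 2 * t^4 else 0) + t\<^sup>2 * (z$i)^4" for i
    by (simp add: d_def axis_def t_def power2_eq_square power4_eq_xxxx algebra_simps)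
  then have "(\<Sum>i\<in>UNIV. (z$i)\<^sup>2 * (d$i)\<^sup>2) = t\<^sup>2 - 2 * t^4 + t\<^sup>2 * s"
    by (simp add: sum.distrib sum_distrib_left s_def)
  also have "\<dots> \<le> 2 * t\<^sup>2 * (1 - t\<^sup>2)"
    using sum_pow4_bounds(2)[OF z] mult_left_mono[of s 1 "t\<^sup>2"]
    by (simp add: s_def power2_eq_square power4_eq_xxxx algebra_simps)
  moreover have "(\<Sum>i\<in>UNIV. (z$i)\<^sup>2 * (v$i)\<^sup>2) = (\<Sum>i\<in>UNIV. (z$i)\<^sup>2 * (d$i)\<^sup>2) / (1 - t\<^sup>2)"
    using pos by (simp add: v_def power_divide sum_divide_distrib)
  ultimately have "(\<Sum>i\<in>UNIV. (z$i)\<^sup>2 * (v$i)\<^sup>2) \<le> 2 * t\<^sup>2"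
    using pos by (simp add: divide_le_eq)
  moreover have "v \<bullet> z = 0" "v \<bullet> v = 1"
    using dz dd pos by (simp_all add: v_def)
  ultimately show ?thesis
    by (auto simp: t_def)
qed

text \<open>Outside both alternatives \<open>t\<^sup>2 \<ge> 1/(8n)\<close> and \<open>s - t\<^sup>2 \<ge> 7/(12n)\<close>, which makes
  \<open>(2\<beta> \<bar>t\<^sup>3 - s t\<bar>)\<^sup>2 \<ge> 98 K\<^sup>2 / 9\<close>.\<close>

lemma small_cubic_residual_dichotomy:
  fixes n s t \<beta> K :: real
  assumes n: "0 < n" and s: "1 / n \<le> s" and \<beta>: "0 \<le> \<beta>" "8 * K * n powr (3/2) \<le> \<beta>"
    and small: "2 * \<beta> * \<bar>t^3 - s * t\<bar> < K"
  shows "1 / (4 * n) \<le> 3 * t\<^sup>2 - s \<or> 6 * t\<^sup>2 - s \<le> - 1 / (4 * n)"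
proof (rule ccontr)
  assume "\<not> ?thesis"
  then have mid: "3 * t\<^sup>2 - s < 1 / (4 * n)" "- 1 / (4 * n) < 6 * t\<^sup>2 - s"
    by auto
  have "1 / (4 * n) = (1 / n) / 4" "1 / (8 * n) = (1 / n) / 8" "7 / (12 * n) = 7 * (1 / n) / 12"
    by simp_all
  then have lower: "1 / (8 * n) \<le> t\<^sup>2" "7 / (12 * n) \<le> s - t\<^sup>2"
    using mid s by linarith+
  have "0 \<le> 2 * \<beta> * \<bar>t^3 - s * t\<bar>"
    using \<beta>(1) by simp
  with small have "K > 0" by linarith
  have "(n powr (3/2))\<^sup>2 = n^3"
    using n by (simp add: power2_eq_square flip: powr_add)
  then have "64 * K\<^sup>2 * n^3 = (8 * K * n powr (3/2))\<^sup>2"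
    by (simp add: power_mult_distrib)
  also have "\<dots> \<le> \<beta>\<^sup>2"
    using \<beta>(2) \<open>K > 0\<close> n by (intro power_mono) auto
  finally have \<beta>_sq: "64 * K\<^sup>2 * n^3 \<le> \<beta>\<^sup>2" .
  have "(1 / (8 * n)) * (7 / (12 * n))\<^sup>2 \<le> t\<^sup>2 * (s - t\<^sup>2)\<^sup>2"
    using lower n by (intro mult_mono power_mono) auto
  with \<beta>_sq have "64 * K\<^sup>2 * n^3 * ((1 / (8 * n)) * (7 / (12 * n))\<^sup>2) \<le> \<beta>\<^sup>2 * (t\<^sup>2 * (s - t\<^sup>2)\<^sup>2)"
    by (rule mult_mono) (use n in auto)
  moreover have "64 * K\<^sup>2 * n^3 * ((1 / (8 * n)) * (7 / (12 * n))\<^sup>2) = 49 / 18 * K\<^sup>2"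
    using n by (simp add: field_simps power2_eq_square power3_eq_cube)
  moreover have "(2 * \<beta> * \<bar>t^3 - s * t\<bar>)\<^sup>2 < K\<^sup>2"
    using small \<beta>(1) by (intro power_strict_mono) auto
  moreover have "(2 * \<beta> * \<bar>t^3 - s * t\<bar>)\<^sup>2 = 4 * (\<beta>\<^sup>2 * (t\<^sup>2 * (s - t\<^sup>2)\<^sup>2))"
    by (simp add: power_mult_distrib power2_eq_square power3_eq_cube algebra_simps)
  moreover have "0 < K\<^sup>2"
    using \<open>K > 0\<close> by simp
  ultimately show False by linarith
qed

lemma symmetric_mat_inner_commute:
  fixes A :: "real^'n^'n"
  assumes "symmetric_mat A"
  shows "x \<bullet> (A *v y) = y \<bullet> (A *v x)"
proof -
  have "x v* A = A *v x"
    using assms transpose_matrix_vector[of A x] by (simp add: symmetric_mat_def)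
  then have "x \<bullet> (A *v y) = (A *v x) \<bullet> y"
    by (simp flip: dot_lmul_matrix)
  then show ?thesis
    by (simp only: inner_commute)
qed

lemma linear_coeff_eq_0_if_quadratic_nonneg:
  fixes b c :: real
  assumes "\<And>t. 0 \<le> b * t + c * t\<^sup>2"
  shows "b = 0"
proof -
  define d where "d = \<bar>c\<bar> + 1"
  define t where "t = - b / d"
  have "d > 0" "c - d < 0"
    by (simp_all add: d_def)
  then have "b = - t * d"
    by (simp add: t_def)
  then have "0 \<le> t\<^sup>2 * (c - d)"
    using assms[of t] by (simp add: power2_eq_square algebra_simps)
  with \<open>c - d < 0\<close> have "t = 0"
    by (simp add: zero_le_mult_iff)
  with \<open>b = - t * d\<close> show ?thesis
    by simp
qed

lemma eigenvector_if_max_quadratic_form: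
  fixes A :: "real^'n^'n"
  assumes sym: "symmetric_mat A"
    and le: "\<And>u. u \<bullet> (A *v u) \<le> M * (u \<bullet> u)"
    and eq: "x \<bullet> (A *v x) = M * (x \<bullet> x)"
  shows "A *v x = M *\<^sub>R x"
proof -
  define q where "q u = M * (u \<bullet> u) - u \<bullet> (A *v u)" for u
  define w where "w = M *\<^sub>R x - A *v x"
  have "q x = 0" and nonneg: "0 \<le> q u" for u
    using eq le by (simp_all add: q_def)
  have "q (x + t *\<^sub>R w) = q x + 2 * t * (w \<bullet> (M *\<^sub>R x - A *v x)) + t\<^sup>2 * q w" for t
    using symmetric_mat_inner_commute[OF sym, of x w] inner_commute[of x w]
    by (simp add: q_def algebra_simps power2_eq_square)
  then have "q (x + t *\<^sub>R w) = (2 * (w \<bullet> w)) * t + q w * t\<^sup>2" for t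
    using \<open>q x = 0\<close> by (simp add: flip: w_def)
  then have "0 \<le> (2 * (w \<bullet> w)) * t + q w * t\<^sup>2" for t
    using nonneg[of "x + t *\<^sub>R w"] by simp
  then have "2 * (w \<bullet> w) = 0"
    by (rule linear_coeff_eq_0_if_quadratic_nonneg)
  then show ?thesis by (simp add: w_def)
qed

lemma finite_eigenvalues:
  fixes A :: "real^'n^'n"
  assumes sym: "symmetric_mat A"
  shows "finite (eigenvalues A)"
proof -
  define vec where "vec l = (SOME v. v \<noteq> 0 \<and> A *v v = l *\<^sub>R v)" for l
  have vec: "vec l \<noteq> 0 \<and> A *v vec l = l *\<^sub>R vec l" if "l \<in> eigenvalues A" for l
    using that unfolding vec_def eigenvalues_def mem_Collect_eq by (rule someI_ex)
  have inj: "inj_on vec (eigenvalues A)"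
  proof (rule inj_onI)
    fix a b assume a: "a \<in> eigenvalues A" and b: "b \<in> eigenvalues A" and "vec a = vec b"
    then have "a *\<^sub>R vec a = b *\<^sub>R vec a"
      using vec[OF a] vec[OF b] by metis
    then show "a = b"
      using vec[OF a] by simp
  qed
  have "pairwise orthogonal (vec ` eigenvalues A)"
  proof (rule pairwise_imageI)
    fix a b assume a: "a \<in> eigenvalues A" and b: "b \<in> eigenvalues A" and "vec a \<noteq> vec b"
    then have "a \<noteq> b" by blast
    have "b * (vec a \<bullet> vec b) = a * (vec a \<bullet> vec b)"
      using symmetric_mat_inner_commute[OF sym, of "vec a" "vec b"] vec[OF a] vec[OF b]
      by (simp add: inner_commute)
    with \<open>a \<noteq> b\<close> show "orthogonal (vec a) (vec b)"
      by (simp add: orthogonal_def)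
  qed
  then have "finite (vec ` eigenvalues A)"
    by (rule pairwise_orthogonal_imp_finite)
  then show ?thesis
    using inj by (rule finite_imageD)
qed

lemma ex_eigenvalue_bounding_quadratic_form:
  fixes A :: "real^'n^'n"
  assumes sym: "symmetric_mat A"
  shows "\<exists>M \<in> eigenvalues A. \<forall>u. u \<bullet> (A *v u) \<le> M * (u \<bullet> u)"
proof -
  let ?q = "\<lambda>x. x \<bullet> (A *v x)"
  have cont: "continuous_on (sphere 0 1) ?q"
    by (intro continuous_intros linear_continuous_on matrix_vector_mul_linear)
  have "sphere (0::real^'n) 1 \<noteq> {}" by simp
  then obtain x where x: "x \<in> sphere 0 1" and max: "\<And>y. y \<in> sphere 0 1 \<Longrightarrow> ?q y \<le> ?q x"
    using continuous_attains_sup[OF compact_sphere _ cont] by blast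
  have le: "?q u \<le> ?q x * (u \<bullet> u)" for u
  proof (cases "u = 0")
    case False
    have "?q ((1 / norm u) *\<^sub>R u) \<le> ?q x"
      using False by (intro max) simp
    then show ?thesis
      using False by (simp add: algebra_simps divide_le_eq power2_eq_square flip: power2_norm_eq_inner)
  qed simp
  have "x \<bullet> x = 1" using x by (simp add: norm_eq_1)
  then have "A *v x = ?q x *\<^sub>R x"
    using eigenvector_if_max_quadratic_form[OF sym le] by simp
  moreover have "x \<noteq> 0" using x by auto
  ultimately show ?thesis
    using le unfolding eigenvalues_def by blast
qed

lemma quadratic_form_eigenvalue_bounds:
  fixes A :: "real^'n^'n"
  assumes sym: "symmetric_mat A"
  shows "x \<bullet> (A *v x) \<le> Max (eigenvalues A) * (x \<bullet> x)"
    and "Min (eigenvalues A) * (x \<bullet> x) \<le> x \<bullet> (A *v x)"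
proof -
  obtain M where M: "M \<in> eigenvalues A" "\<And>u. u \<bullet> (A *v u) \<le> M * (u \<bullet> u)"
    using ex_eigenvalue_bounding_quadratic_form[OF sym] by blast
  have "M \<le> Max (eigenvalues A)"
    using M(1) finite_eigenvalues[OF sym] by simp
  then have "M * (x \<bullet> x) \<le> Max (eigenvalues A) * (x \<bullet> x)"
    by (rule mult_right_mono) simp
  with M(2)[of x] show "x \<bullet> (A *v x) \<le> Max (eigenvalues A) * (x \<bullet> x)"
    by linarith
  have uminus: "(- A) *v v = - (A *v v)" for v :: "real^'n"
    by (simp add: vec_eq_iff matrix_vector_mult_def sum_negf)
  have "symmetric_mat (- A)"
    using sym by (simp add: symmetric_mat_def transpose_def vec_eq_iff)
  then obtain N where N: "N \<in> eigenvalues (- A)" "\<And>u. u \<bullet> ((- A) *v u) \<le> N * (u \<bullet> u)"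
    using ex_eigenvalue_bounding_quadratic_form[of "- A"] by blast
  have "- (A *v v) = N *\<^sub>R v \<longleftrightarrow> A *v v = (- N) *\<^sub>R v" for v :: "real^'n"
    by (metis minus_minus scaleR_minus_left)
  then have "- N \<in> eigenvalues A"
    using N(1) by (simp add: eigenvalues_def uminus)
  then have "Min (eigenvalues A) \<le> - N"
    using finite_eigenvalues[OF sym] by simp
  then have "Min (eigenvalues A) * (x \<bullet> x) \<le> - N * (x \<bullet> x)"
    by (rule mult_right_mono) simp
  moreover have "- N * (x \<bullet> x) \<le> x \<bullet> (A *v x)"
    using N(2)[of x] by (simp add: uminus)
  ultimately show "Min (eigenvalues A) * (x \<bullet> x) \<le> x \<bullet> (A *v x)"
    by linarith
qed

lemma spread_nonneg:
  fixes A :: "real^'n^'n"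
  assumes "symmetric_mat A"
  shows "0 \<le> spread A"
proof -
  obtain M where "M \<in> eigenvalues A" and "\<And>u. u \<bullet> (A *v u) \<le> M * (u \<bullet> u)"
    using ex_eigenvalue_bounding_quadratic_form[OF assms] by blast
  then have "Min (eigenvalues A) \<le> M" "M \<le> Max (eigenvalues A)"
    using finite_eigenvalues[OF assms] by simp_all
  then show ?thesis
    by (simp add: spread_def)
qed

lemma quadratic_form_diff_le_spread:
  fixes A :: "real^'n^'n"
  assumes "symmetric_mat A" and "u \<bullet> u = v \<bullet> v"
  shows "u \<bullet> (A *v u) - v \<bullet> (A *v v) \<le> spread A * (u \<bullet> u)"
  using quadratic_form_eigenvalue_bounds(1)[OF assms(1), of u]
    quadratic_form_eigenvalue_bounds(2)[OF assms(1), of v] assms(2)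
  by (simp add: spread_def left_diff_distrib)

text \<open>For the tangential part \<open>e\<close> of \<open>A z\<close> and \<open>r = \<parallel>e\<parallel>\<close>, the vectors \<open>r z \<plusminus> e\<close> have equal
  norms and their quadratic forms differ by \<open>4 r\<^sup>3\<close>.\<close>

lemma norm_tangential_le_half_spread:
  fixes A :: "real^'n^'n"
  assumes sym: "symmetric_mat A" and z: "z \<bullet> z = 1"
  shows "norm (A *v z - (z \<bullet> (A *v z)) *\<^sub>R z) \<le> spread A / 2"
proof -
  define a where "a = z \<bullet> (A *v z)"
  define e where "e = A *v z - a *\<^sub>R z"
  define r where "r = norm e"
  have ez: "e \<bullet> z = 0"
    using z by (simp add: e_def a_def inner_diff_left inner_commute[of "A *v z"])
  have ee: "e \<bullet> e = r\<^sup>2"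
    by (simp add: r_def power2_norm_eq_inner)
  have "A *v z = e + a *\<^sub>R z"
    by (simp add: e_def)
  then have eAz: "e \<bullet> (A *v z) = r\<^sup>2"
    using ez ee by (simp add: inner_add_right)
  have norms: "(r *\<^sub>R z + e) \<bullet> (r *\<^sub>R z + e) = 2 * r\<^sup>2"
    "(r *\<^sub>R z - e) \<bullet> (r *\<^sub>R z - e) = 2 * r\<^sup>2"
    using z ez ee by (simp_all add: algebra_simps inner_commute power2_eq_square)
  have "4 * r * r\<^sup>2 = (r *\<^sub>R z + e) \<bullet> (A *v (r *\<^sub>R z + e)) - (r *\<^sub>R z - e) \<bullet> (A *v (r *\<^sub>R z - e))"
    using eAz symmetric_mat_inner_commute[OF sym, of z e] by (simp add: algebra_simps)
  also have "\<dots> \<le> spread A * (2 * r\<^sup>2)"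
    using quadratic_form_diff_le_spread[OF sym, of "r *\<^sub>R z + e" "r *\<^sub>R z - e"] norms by simp
  finally have "r * (4 * r\<^sup>2) \<le> (spread A / 2) * (4 * r\<^sup>2)"
    by (simp add: algebra_simps)
  moreover have "0 \<le> spread A"
    using quadratic_form_diff_le_spread[OF sym, of z z] z by simp
  ultimately have "r \<le> spread A / 2"
    by (cases "r = 0") (simp_all add: r_def)
  then show ?thesis by (simp add: r_def e_def a_def)
qed

lemma rhess_bounds:
  fixes A :: "real^'n^'n"
  assumes sym: "symmetric_mat A" and z: "z \<bullet> z = 1" and v: "v \<bullet> v = 1"
  shows "\<bar>rhess A \<beta> z v - 2 * \<beta> * (3 * (\<Sum>i\<in>UNIV. (z$i)\<^sup>2 * (v$i)\<^sup>2) - (\<Sum>k\<in>UNIV. (z$k)^4))\<bar>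
    \<le> spread A"
proof -
  have mult: "(A + (6 * \<beta>) *\<^sub>R diag_sq z - (2 * lam A \<beta> z) *\<^sub>R mat 1) *v v
      = A *v v + (6 * \<beta>) *\<^sub>R (diag_sq z *v v) - (2 * lam A \<beta> z) *\<^sub>R v"
    by (simp add: matrix_vector_mult_diff_rdistrib matrix_vector_mult_add_rdistrib
        scaleR_matrix_vector_assoc[symmetric] matrix_vector_mul_lid)
  have "v \<bullet> (diag_sq z *v v) = (\<Sum>i\<in>UNIV. (z$i)\<^sup>2 * (v$i)\<^sup>2)"
    by (simp add: inner_vec_def diag_sq_mult_vec_nth power2_eq_square algebra_simps)
  with v have "rhess A \<beta> z v = v \<bullet> (A *v v) - z \<bullet> (A *v z)
      + 2 * \<beta> * (3 * (\<Sum>i\<in>UNIV. (z$i)\<^sup>2 * (v$i)\<^sup>2) - (\<Sum>k\<in>UNIV. (z$k)^4))"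
    unfolding rhess_def mult by (simp add: inner_diff_right lam_def algebra_simps)
  then show ?thesis
    using quadratic_form_eigenvalue_bounds[OF sym, of v] quadratic_form_eigenvalue_bounds[OF sym, of z] z v
    by (simp add: abs_le_iff spread_def)
qed

lemma cubic_residual_le_rgrad:
  fixes A :: "real^'n^'n"
  assumes sym: "symmetric_mat A" and z: "z \<bullet> z = 1" and "0 \<le> \<beta>"
  shows "2 * \<beta> * \<bar>(z$j)^3 - (\<Sum>k\<in>UNIV. (z$k)^4) * z$j\<bar> \<le> norm (rgrad A \<beta> z) + spread A / 2"
proof -
  define w where "w = (\<chi> i. (z$i)^3 - (\<Sum>k\<in>UNIV. (z$k)^4) * z$i)"
  define e where "e = A *v z - (z \<bullet> (A *v z)) *\<^sub>R z"
  have "(A + (2 * \<beta>) *\<^sub>R diag_sq z) *v z = A *v z + (2 * \<beta>) *\<^sub>R (diag_sq z *v z)"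
    by (simp add: matrix_vector_mult_add_rdistrib scaleR_matrix_vector_assoc[symmetric])
  with z have "rgrad A \<beta> z = e + (2 * \<beta>) *\<^sub>R w"
    unfolding rgrad_def lam_def e_def w_def
    by (simp add: vec_eq_iff diag_sq_mult_vec_nth algebra_simps power3_eq_cube power2_eq_square)
  then have "norm ((2 * \<beta>) *\<^sub>R w) \<le> norm (rgrad A \<beta> z) + norm e"
    by (metis add_diff_cancel_left' norm_triangle_ineq4)
  moreover have "2 * \<beta> * \<bar>w$j\<bar> \<le> norm ((2 * \<beta>) *\<^sub>R w)"
    using assms(3) component_le_norm_cart[of w j] by (simp add: mult_left_mono)
  moreover have "norm e \<le> spread A / 2"
    using norm_tangential_le_half_spread[OF sym z] by (simp add: e_def)
  ultimately show ?thesis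
    by (simp add: w_def)
qed

theorem theorem12:
  fixes A :: "real^'n^'n" and \<beta> \<gamma> :: real
  assumes "CARD('n) \<ge> 2"
    and "symmetric_mat A"
    and "\<gamma> > 0"
    and "\<beta> \<ge> 8 * real CARD('n) / (real CARD('n) - 1) * (1 + \<gamma>) * spread A * real CARD('n) powr (3/2)"
  shows "let n = real CARD('n); \<rho> = spread A;
             C = 4 / (n - 1) * (1 + \<gamma>) * n powr (3/2) - 1
         in strict_saddle A \<beta> (C * \<rho>) (\<gamma> / sqrt 2 * \<rho>) (C * \<rho>)"
proof -
  define n where "n = real CARD('n)"
  define \<rho> where "\<rho> = spread A"
  define C where "C = 4 / (n - 1) * (1 + \<gamma>) * n powr (3/2) - 1"
  define \<xi> where "\<xi> = C * \<rho>"
  define \<epsilon> where "\<epsilon> = \<gamma> / sqrt 2 * \<rho>"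
  define B where "B = 8 * n / (n - 1) * (1 + \<gamma>) * \<rho> * n powr (3/2)"
  have "n \<ge> 2" "0 \<le> \<rho>" "B \<le> \<beta>"
    using assms spread_nonneg by (simp_all add: n_def \<rho>_def B_def)
  have "0 \<le> B"
    using \<open>n \<ge> 2\<close> \<open>0 \<le> \<rho>\<close> \<open>\<gamma> > 0\<close> by (simp add: B_def)
  with \<open>B \<le> \<beta>\<close> have "0 \<le> \<beta>" by linarith
  have "\<gamma> / sqrt 2 \<le> \<gamma>"
    using \<open>\<gamma> > 0\<close> by (simp add: divide_le_eq)
  then have "\<epsilon> + \<rho> / 2 \<le> (1 + \<gamma>) * \<rho>"
    using \<open>0 \<le> \<rho>\<close> mult_right_mono[of "\<gamma> / sqrt 2" \<gamma> \<rho>] by (simp add: \<epsilon>_def algebra_simps)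
  also have "\<dots> \<le> n / (n - 1) * ((1 + \<gamma>) * \<rho>)"
    using \<open>n \<ge> 2\<close> \<open>0 \<le> \<rho>\<close> \<open>\<gamma> > 0\<close> mult_right_mono[of 1 "n / (n - 1)" "(1 + \<gamma>) * \<rho>"]
    by simp
  finally have "8 * (\<epsilon> + \<rho> / 2) * n powr (3/2) \<le> 8 * (n / (n - 1) * ((1 + \<gamma>) * \<rho>)) * n powr (3/2)"
    by (intro mult_right_mono) simp_all
  with \<open>B \<le> \<beta>\<close> have grad: "8 * (\<epsilon> + \<rho> / 2) * n powr (3/2) \<le> \<beta>"
    by (simp add: B_def)
  have "2 * n * (\<xi> + \<rho>) = B"
    using \<open>n \<ge> 2\<close> by (simp add: B_def C_def \<xi>_def field_simps)
  with \<open>B \<le> \<beta>\<close> \<open>n \<ge> 2\<close> have gap: "\<xi> + \<rho> \<le> 2 * \<beta> * (1 / (4 * n))"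
    by (simp add: field_simps)
  have "strict_saddle A \<beta> \<xi> \<epsilon> \<xi>"
    unfolding strict_saddle_def
  proof (intro allI impI)
    fix z :: "real^'n"
    assume "norm z = 1"
    then have z: "z \<bullet> z = 1" by (simp add: norm_eq_1)
    define s where "s = (\<Sum>k\<in>UNIV. (z$k)^4)"
    define quartic where "quartic v = 2 * \<beta> * (3 * (\<Sum>i\<in>UNIV. (z$i)\<^sup>2 * (v$i)\<^sup>2) - s)" for v
    have hess: "\<bar>rhess A \<beta> z v - quartic v\<bar> \<le> \<rho>" if "v \<bullet> v = 1" for v
      using rhess_bounds[OF assms(2) z that] by (simp add: quartic_def s_def \<rho>_def)
    obtain j where "Min (range (\<lambda>i. (z$i)\<^sup>2)) = (z$j)\<^sup>2"
      using obtains_MIN[of UNIV "\<lambda>i. (z$i)\<^sup>2"] by auto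
    then have min: "(z$j)\<^sup>2 \<le> (z$i)\<^sup>2" for i
      using Min_le[of "range (\<lambda>i. (z$i)\<^sup>2)" "(z$i)\<^sup>2"] by simp
    show "(\<forall>v. v \<bullet> z = 0 \<and> norm v = 1 \<longrightarrow> \<xi> \<le> rhess A \<beta> z v) \<or> \<epsilon> \<le> norm (rgrad A \<beta> z)
      \<or> (\<exists>v. v \<bullet> z = 0 \<and> norm v = 1 \<and> rhess A \<beta> z v \<le> - \<xi>)"
    proof (cases "\<epsilon> \<le> norm (rgrad A \<beta> z)")
      case False
      then have "2 * \<beta> * \<bar>(z$j)^3 - s * z$j\<bar> < \<epsilon> + \<rho> / 2"
        using cubic_residual_le_rgrad[OF assms(2) z \<open>0 \<le> \<beta>\<close>, of j] by (simp add: s_def \<rho>_def)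
      then consider "1 / (4 * n) \<le> 3 * (z$j)\<^sup>2 - s" | "6 * (z$j)\<^sup>2 - s \<le> - 1 / (4 * n)"
        using small_cubic_residual_dichotomy[OF _ _ \<open>0 \<le> \<beta>\<close> grad] \<open>n \<ge> 2\<close> sum_pow4_bounds(1)[OF z]
        by (auto simp: s_def n_def)
      then show ?thesis
      proof cases
        case 1
        have "\<xi> \<le> rhess A \<beta> z v" if "v \<bullet> v = 1" for v
        proof -
          have "(z$j)\<^sup>2 = (\<Sum>i\<in>UNIV. (z$j)\<^sup>2 * (v$i)\<^sup>2)"
            using that by (simp add: inner_vec_def power2_eq_square flip: sum_distrib_left)
          also have "\<dots> \<le> (\<Sum>i\<in>UNIV. (z$i)\<^sup>2 * (v$i)\<^sup>2)"
            using min by (intro sum_mono mult_right_mono) auto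
          finally have "1 / (4 * n) \<le> 3 * (\<Sum>i\<in>UNIV. (z$i)\<^sup>2 * (v$i)\<^sup>2) - s"
            using 1 by linarith
          then have "2 * \<beta> * (1 / (4 * n)) \<le> quartic v"
            unfolding quartic_def using \<open>0 \<le> \<beta>\<close> by (intro mult_left_mono) auto
          with hess[OF that] gap show ?thesis
            unfolding abs_le_iff by linarith
        qed
        then show ?thesis by (simp add: norm_eq_1)
      next
        case 2
        moreover have "0 < 1 / (4 * n)" "s \<le> 1"
          using \<open>n \<ge> 2\<close> sum_pow4_bounds(2)[OF z] by (simp_all add: s_def)
        ultimately have "(z$j)\<^sup>2 < 1" by linarith
        then obtain v where v: "v \<bullet> z = 0" "v \<bullet> v = 1"
          and weighted: "(\<Sum>i\<in>UNIV. (z$i)\<^sup>2 * (v$i)\<^sup>2) \<le> 2 * (z$j)\<^sup>2"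
          using ex_unit_tangent_weighted_sq_le[OF z] by blast
        have "3 * (\<Sum>i\<in>UNIV. (z$i)\<^sup>2 * (v$i)\<^sup>2) - s \<le> - (1 / (4 * n))"
          using 2 weighted by linarith
        then have "quartic v \<le> 2 * \<beta> * - (1 / (4 * n))"
          unfolding quartic_def using \<open>0 \<le> \<beta>\<close> by (intro mult_left_mono) auto
        with hess[OF v(2)] gap have "rhess A \<beta> z v \<le> - \<xi>"
          unfolding abs_le_iff by linarith
        with v show ?thesis by (auto simp: norm_eq_1)
      qed
    qed simp
  qed
  then show ?thesis
    by (simp add: n_def \<rho>_def C_def \<xi>_def \<epsilon>_def)
qed

end
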